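(* For every $(\mu,\sigma)\in\Theta$, $$\sup_{x\in\mathbb{R}}|F_{(\mu,\sigma)}(x)-F_{(0,1)}(x)|=\max\{U(\mu,\sigma),V(\mu,\sigma)\},$$ where $$U(\mu,\sigma)=1-\exp\Big\{-\max\Big\{\mu,-\frac{\mu}{\sigma}\Big\}\Big\},$$ $V(\mu,1)=0$, and for $\sigma\ne1$ $$V(\mu,\sigma)=|1-\sigma|\exp\Big\{\frac{\mu-\sigma\ln\sigma}{\sigma-1}\Big\}\,\mathbb{1}_{\{\mu/\ln(\sigma)<\min\{\sigma,1\}\}}.$$
   Context: For $\vartheta=(\mu,\sigma)\in\Theta=\mathbb{R}\times(0,\infty)$, $F_\vartheta(x)=1-\exp\{-(x-\mu)/\sigma\}$ for $x>\mu$ and $F_\vartheta(x)=0$ for $x\le\mu$ (two-parameter exponential cdf). *)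

theory Defs
  imports "HOL-Analysis.Analysis"
begin

definition expF :: "real \<Rightarrow> real \<Rightarrow> real \<Rightarrow> real" where
  "expF \<mu> \<sigma> x = (if x > \<mu> then 1 - exp (-(x - \<mu>) / \<sigma>) else 0)"

definition U :: "real \<Rightarrow> real \<Rightarrow> real" where
  "U \<mu> \<sigma> = 1 - exp (- max \<mu> (- \<mu> / \<sigma>))"

definition V :: "real \<Rightarrow> real \<Rightarrow> real" where
  "V \<mu> \<sigma> = (if \<sigma> = 1 then 0
     else \<bar>1 - \<sigma>\<bar> * exp ((\<mu> - \<sigma> * ln \<sigma>) / (\<sigma> - 1)) *
          (if \<mu> / ln \<sigma> < min \<sigma> 1 then 1 else 0))"

end

theory Submission
  imports Defs
begin

text \<open>For \<open>x \<le> max \<mu> 0\<close> only one of the two cdfs is non-zero, so the gap is monotone there and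
  largest at \<open>max \<mu> 0\<close>, where it equals \<open>U\<close>. Beyond that point the gap is the difference
  \<open>exp (- x) - exp (- (x - \<mu>) / \<sigma>)\<close> of the survival functions. Multiplied by \<open>1 - \<sigma>\<close>, it
  increases up to the unique critical point \<open>(\<sigma> ln \<sigma> - \<mu>) / (\<sigma> - 1)\<close>, decreases afterwards and
  is eventually non-negative, so its modulus is bounded by its values at \<open>max \<mu> 0\<close> and, if the
  critical point lies to the right of \<open>max \<mu> 0\<close>, at the critical point, where it equals \<open>V\<close>. For \<open>\<sigma> = 1\<close> the gap is a multiple of
  \<open>exp (- x)\<close> and \<open>V = 0\<close>.\<close>

lemma abs_le_max_unimodal:
  fixes g g' :: "real \<Rightarrow> real"
  assumes deriv: "\<And>x. (g has_real_derivative g' x) (at x)"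
    and incr: "\<And>x. x \<le> c \<Longrightarrow> g' x \<ge> 0"
    and decr: "\<And>x. x \<ge> c \<Longrightarrow> g' x \<le> 0"
    and nonneg_far_right: "\<And>x. \<exists>y\<ge>x. g y \<ge> 0"
    and "a \<le> x"
  shows "\<bar>g x\<bar> \<le> max \<bar>g a\<bar> (if a < c then \<bar>g c\<bar> else 0)"
proof -
  have up: "g u \<le> g v" if "u \<le> v" "v \<le> c" for u v
    using DERIV_nonneg_imp_nondecreasing[of u v g] that deriv incr by force
  have down: "g v \<le> g u" if "u \<le> v" "c \<le> u" for u v
    using DERIV_nonpos_imp_nonincreasing[of u v g] that deriv decr by force
  show ?thesis
  proof (cases "c \<le> x")
    case True
    obtain y where "x \<le> y" "g y \<ge> 0" using nonneg_far_right by blast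
    with down[of x y] True have "g x \<ge> 0" by simp
    with True down[of c x] down[of a x] \<open>a \<le> x\<close> show ?thesis by auto
  next
    case False
    with up[of a x] up[of x c] \<open>a \<le> x\<close> show ?thesis by auto
  qed
qed

lemma mult_exp_minus_one_nonneg:
  fixes s t :: real
  assumes "s > 0" "r * t \<ge> 0"
  shows "r * (exp (t / s) - 1) \<ge> 0"
proof (cases "t \<ge> 0")
  case True
  then have "exp (t / s) \<ge> 1" using assms(1) by simp
  moreover have "t = 0 \<or> r \<ge> 0" using True assms(2) by (auto simp: zero_le_mult_iff)
  ultimately show ?thesis by auto
next
  case False
  then have "exp (t / s) < 1" using assms(1) by (simp add: divide_neg_pos)
  moreover have "r \<le> 0" using False assms(2) by (auto simp: zero_le_mult_iff)
  ultimately show ?thesis by (simp add: mult_nonpos_nonpos)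
qed

lemma one_minus_mult_exp_minus_one_nonneg:
  fixes s c y :: real
  assumes "s > 0" "y \<le> c"
  shows "(1 - s) * (exp ((s - 1) * (y - c) / s) - 1) \<ge> 0"
proof -
  have "(1 - s) * ((s - 1) * (y - c)) = (s - 1)\<^sup>2 * (c - y)" by algebra
  also have "\<dots> \<ge> 0" using assms(2) by simp
  finally show ?thesis by (intro mult_exp_minus_one_nonneg assms(1))
qed

lemma one_minus_mult_exp_minus_one_nonpos:
  fixes s c y :: real
  assumes "s > 0" "c \<le> y"
  shows "(1 - s) * (exp ((s - 1) * (y - c) / s) - 1) \<le> 0"
proof -
  have "(s - 1) * ((s - 1) * (y - c)) = (s - 1)\<^sup>2 * (y - c)" by algebra
  also have "\<dots> \<ge> 0" using assms(2) by simp
  finally have "(s - 1) * (exp ((s - 1) * (y - c) / s) - 1) \<ge> 0"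
    by (intro mult_exp_minus_one_nonneg assms(1))
  then show ?thesis by (simp add: left_diff_distrib)
qed

lemma mono_expF:
  assumes "\<sigma> > 0"
  shows "mono (expF \<mu> \<sigma>)"
proof (rule monoI)
  fix x y :: real
  assume "x \<le> y"
  with assms have "exp (- (y - \<mu>) / \<sigma>) \<le> exp (- (x - \<mu>) / \<sigma>)"
    by (simp add: divide_right_mono)
  moreover have "\<mu> < y \<Longrightarrow> exp (- (y - \<mu>) / \<sigma>) \<le> 1"
    using assms by (simp add: divide_nonpos_pos)
  ultimately show "expF \<mu> \<sigma> x \<le> expF \<mu> \<sigma> y"
    using \<open>x \<le> y\<close> by (auto simp: expF_def)
qed

lemma expF_nonneg: "\<sigma> > 0 \<Longrightarrow> expF \<mu> \<sigma> x \<ge> 0"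
  by (simp add: expF_def divide_nonpos_pos)

lemma abs_expF_diff_le_at_max:
  assumes "\<sigma> > 0" "x \<le> max \<mu> 0"
  shows "\<bar>expF \<mu> \<sigma> x - expF 0 1 x\<bar> \<le> \<bar>expF \<mu> \<sigma> (max \<mu> 0) - expF 0 1 (max \<mu> 0)\<bar>"
proof (cases "\<mu> > 0")
  case True
  then have "expF \<mu> \<sigma> x = 0" "expF \<mu> \<sigma> \<mu> = 0" using assms(2) by (auto simp: expF_def)
  moreover have "expF 0 1 x \<le> expF 0 1 \<mu>" using assms(2) True mono_expF[of 1 0] by (simp add: monoD)
  ultimately show ?thesis using True expF_nonneg[of 1 0 x] by simp
next
  case False
  then have "expF 0 1 x = 0" "expF 0 1 0 = 0" using assms(2) by (auto simp: expF_def)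
  moreover have "expF \<mu> \<sigma> x \<le> expF \<mu> \<sigma> 0" using assms False mono_expF[of \<sigma> \<mu>] by (simp add: monoD)
  ultimately show ?thesis using False expF_nonneg[OF assms(1), of \<mu> x] by simp
qed

definition tail_diff :: "real \<Rightarrow> real \<Rightarrow> real \<Rightarrow> real" where
  "tail_diff \<mu> \<sigma> x = exp (- x) - exp (- (x - \<mu>) / \<sigma>)"

definition crit_point :: "real \<Rightarrow> real \<Rightarrow> real" where
  "crit_point \<mu> \<sigma> = (\<sigma> * ln \<sigma> - \<mu>) / (\<sigma> - 1)"

lemma expF_diff_eq_tail_diff:
  assumes "max \<mu> 0 \<le> x"
  shows "expF \<mu> \<sigma> x - expF 0 1 x = tail_diff \<mu> \<sigma> x"
  using assms by (cases "x = \<mu>"; cases "x = 0") (auto simp: expF_def tail_diff_def)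

lemma abs_tail_diff_at_max_eq_U:
  assumes "\<sigma> > 0"
  shows "\<bar>tail_diff \<mu> \<sigma> (max \<mu> 0)\<bar> = U \<mu> \<sigma>"
proof (cases "\<mu> > 0")
  case True
  moreover have "\<mu> / \<sigma> > 0" using True assms by simp
  ultimately have "max \<mu> (- \<mu> / \<sigma>) = \<mu>" by simp
  then show ?thesis using True by (simp add: tail_diff_def U_def)
next
  case False
  then have "\<mu> / \<sigma> \<le> 0" using assms by (simp add: divide_nonpos_pos)
  moreover from this False have "max \<mu> (- \<mu> / \<sigma>) = - \<mu> / \<sigma>" by simp
  ultimately show ?thesis using False by (simp add: tail_diff_def U_def)
qed

lemma tail_diff_factor:
  assumes "\<sigma> > 0"
  shows "tail_diff \<mu> \<sigma> x = exp (- x) * (1 - exp (((\<sigma> - 1) * x + \<mu>) / \<sigma>))"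
proof -
  have "- (x - \<mu>) / \<sigma> = - x + ((\<sigma> - 1) * x + \<mu>) / \<sigma>"
    using assms by (simp add: field_simps)
  then have "exp (- (x - \<mu>) / \<sigma>) = exp (- x) * exp (((\<sigma> - 1) * x + \<mu>) / \<sigma>)"
    by (metis exp_add)
  then show ?thesis by (simp add: tail_diff_def algebra_simps)
qed

lemma one_minus_mult_tail_diff_nonneg_far_right:
  assumes "\<sigma> > 0" "\<sigma> \<noteq> 1"
  shows "\<exists>y\<ge>z. 0 \<le> (1 - \<sigma>) * tail_diff \<mu> \<sigma> y"
proof (intro exI conjI)
  define y where "y = max z (- \<mu> / (\<sigma> - 1))"
  show "z \<le> y" unfolding y_def by simp
  have "(\<sigma> - 1) * ((\<sigma> - 1) * y + \<mu>) = (\<sigma> - 1)\<^sup>2 * (y - (- \<mu> / (\<sigma> - 1)))"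
    using assms(2) by (simp add: field_simps power2_eq_square)
  also have "\<dots> \<ge> 0" unfolding y_def by simp
  finally have "0 \<le> (\<sigma> - 1) * (exp (((\<sigma> - 1) * y + \<mu>) / \<sigma>) - 1)"
    by (intro mult_exp_minus_one_nonneg assms(1))
  moreover have "(1 - \<sigma>) * tail_diff \<mu> \<sigma> y
      = exp (- y) * ((\<sigma> - 1) * (exp (((\<sigma> - 1) * y + \<mu>) / \<sigma>) - 1))"
    unfolding tail_diff_factor[OF assms(1)] by algebra
  ultimately show "0 \<le> (1 - \<sigma>) * tail_diff \<mu> \<sigma> y" by simp
qed

lemma tail_diff_has_real_derivative:
  assumes "\<sigma> > 0" "\<sigma> \<noteq> 1"
  shows "(tail_diff \<mu> \<sigma> has_real_derivative
           exp (- x) * (exp ((\<sigma> - 1) * (x - crit_point \<mu> \<sigma>) / \<sigma>) - 1)) (at x)"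
proof -
  have "(tail_diff \<mu> \<sigma> has_real_derivative - exp (- x) + exp (- (x - \<mu>) / \<sigma>) / \<sigma>) (at x)"
    unfolding tail_diff_def[abs_def] using assms(1)
    by (auto intro!: derivative_eq_intros simp: field_simps)
  moreover have "- (x - \<mu>) / \<sigma> - ln \<sigma> = - x + (\<sigma> - 1) * (x - crit_point \<mu> \<sigma>) / \<sigma>"
    using assms by (simp add: crit_point_def field_simps)
  then have "exp (- (x - \<mu>) / \<sigma>) / \<sigma> = exp (- x) * exp ((\<sigma> - 1) * (x - crit_point \<mu> \<sigma>) / \<sigma>)"
    using assms(1) by (metis exp_add exp_diff exp_ln)
  ultimately show ?thesis by (simp add: algebra_simps)
qed

lemma tail_diff_at_crit_point:
  assumes "\<sigma> > 0" "\<sigma> \<noteq> 1"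
  shows "tail_diff \<mu> \<sigma> (crit_point \<mu> \<sigma>) = (1 - \<sigma>) * exp ((\<mu> - \<sigma> * ln \<sigma>) / (\<sigma> - 1))"
proof -
  have "((\<sigma> - 1) * crit_point \<mu> \<sigma> + \<mu>) / \<sigma> = ln \<sigma>"
    using assms by (simp add: crit_point_def)
  moreover have "- crit_point \<mu> \<sigma> = (\<mu> - \<sigma> * ln \<sigma>) / (\<sigma> - 1)"
    by (simp add: crit_point_def minus_divide_left)
  ultimately show ?thesis using assms(1) by (simp add: tail_diff_factor algebra_simps)
qed

lemma max_lt_crit_point_iff:
  assumes "\<sigma> > 0" "\<sigma> \<noteq> 1"
  shows "max \<mu> 0 < crit_point \<mu> \<sigma> \<longleftrightarrow> \<mu> / ln \<sigma> < min \<sigma> 1"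
proof (cases "\<sigma> < 1")
  case True
  then have "ln \<sigma> < 0" using assms(1) by simp
  then have "ln \<sigma> < \<sigma> * ln \<sigma>" using True by (simp add: mult_less_cancel_right1)
  with assms(1) True \<open>ln \<sigma> < 0\<close> show ?thesis
    by (auto simp: crit_point_def field_simps) (use \<open>ln \<sigma> < \<sigma> * ln \<sigma>\<close> in linarith)
next
  case False
  then have "\<sigma> > 1" using assms by simp
  then have "ln \<sigma> > 0" by simp
  then have "ln \<sigma> < \<sigma> * ln \<sigma>" using \<open>\<sigma> > 1\<close> by simp
  with \<open>\<sigma> > 1\<close> \<open>ln \<sigma> > 0\<close> show ?thesis
    by (auto simp: crit_point_def field_simps) (use \<open>ln \<sigma> < \<sigma> * ln \<sigma>\<close> in linarith)
qed

lemma V_eq_abs_tail_diff_at_crit_point: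
  assumes "\<sigma> > 0" "\<sigma> \<noteq> 1"
  shows "V \<mu> \<sigma> = (if max \<mu> 0 < crit_point \<mu> \<sigma> then \<bar>tail_diff \<mu> \<sigma> (crit_point \<mu> \<sigma>)\<bar> else 0)"
  unfolding V_def max_lt_crit_point_iff[OF assms, symmetric] tail_diff_at_crit_point[OF assms]
  using assms by (simp add: abs_mult)

lemma abs_tail_diff_le_max_U_V:
  assumes "\<sigma> > 0" "max \<mu> 0 \<le> x"
  shows "\<bar>tail_diff \<mu> \<sigma> x\<bar> \<le> max (U \<mu> \<sigma>) (V \<mu> \<sigma>)"
proof (cases "\<sigma> = 1")
  case True
  then have "\<bar>tail_diff \<mu> \<sigma> y\<bar> = exp (- y) * \<bar>1 - exp \<mu>\<bar>" for y
    by (simp add: tail_diff_factor abs_mult)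
  then have "\<bar>tail_diff \<mu> \<sigma> x\<bar> \<le> \<bar>tail_diff \<mu> \<sigma> (max \<mu> 0)\<bar>"
    using assms(2) by (simp add: mult_right_mono)
  then show ?thesis using abs_tail_diff_at_max_eq_U[OF assms(1)] by simp
next
  case False
  define c where "c = crit_point \<mu> \<sigma>"
  define g where "g y = (1 - \<sigma>) * tail_diff \<mu> \<sigma> y" for y
  have "\<bar>g x\<bar> \<le> max \<bar>g (max \<mu> 0)\<bar> (if max \<mu> 0 < c then \<bar>g c\<bar> else 0)"
  proof (rule abs_le_max_unimodal
      [where g' = "\<lambda>y. (1 - \<sigma>) * (exp (- y) * (exp ((\<sigma> - 1) * (y - c) / \<sigma>) - 1))"])
    show "(g has_real_derivative (1 - \<sigma>) * (exp (- y) * (exp ((\<sigma> - 1) * (y - c) / \<sigma>) - 1))) (at y)"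
      for y
      unfolding g_def[abs_def] c_def
      by (intro DERIV_cmult tail_diff_has_real_derivative assms(1) False)
    show "0 \<le> (1 - \<sigma>) * (exp (- y) * (exp ((\<sigma> - 1) * (y - c) / \<sigma>) - 1))" if "y \<le> c" for y
      using one_minus_mult_exp_minus_one_nonneg[OF assms(1) that]
      by (metis mult.left_commute exp_ge_zero mult_nonneg_nonneg)
    show "(1 - \<sigma>) * (exp (- y) * (exp ((\<sigma> - 1) * (y - c) / \<sigma>) - 1)) \<le> 0" if "c \<le> y" for y
      using one_minus_mult_exp_minus_one_nonpos[OF assms(1) that]
      by (metis mult.left_commute exp_ge_zero mult_nonneg_nonpos)
    show "\<exists>y\<ge>z. 0 \<le> g y" for z
      unfolding g_def by (rule one_minus_mult_tail_diff_nonneg_far_right[OF assms(1) False])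
  qed (use assms(2) in simp)
  moreover have "\<bar>g y\<bar> = \<bar>1 - \<sigma>\<bar> * \<bar>tail_diff \<mu> \<sigma> y\<bar>" for y
    by (simp add: g_def abs_mult)
  ultimately have "\<bar>1 - \<sigma>\<bar> * \<bar>tail_diff \<mu> \<sigma> x\<bar> \<le> \<bar>1 - \<sigma>\<bar> *
      max \<bar>tail_diff \<mu> \<sigma> (max \<mu> 0)\<bar> (if max \<mu> 0 < c then \<bar>tail_diff \<mu> \<sigma> c\<bar> else 0)"
    by (cases "max \<mu> 0 < c") (simp_all add: max_mult_distrib_left del: max_less_iff_conj)
  then have "\<bar>tail_diff \<mu> \<sigma> x\<bar>
      \<le> max \<bar>tail_diff \<mu> \<sigma> (max \<mu> 0)\<bar> (if max \<mu> 0 < c then \<bar>tail_diff \<mu> \<sigma> c\<bar> else 0)"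
    using False by (simp add: mult_le_cancel_left_pos)
  then show ?thesis
    unfolding V_eq_abs_tail_diff_at_crit_point[OF assms(1) False] c_def[symmetric]
      abs_tail_diff_at_max_eq_U[OF assms(1), symmetric] .
qed

lemma abs_expF_diff_le_max_U_V:
  assumes "\<sigma> > 0"
  shows "\<bar>expF \<mu> \<sigma> x - expF 0 1 x\<bar> \<le> max (U \<mu> \<sigma>) (V \<mu> \<sigma>)"
proof (cases "x \<le> max \<mu> 0")
  case True
  then have "\<bar>expF \<mu> \<sigma> x - expF 0 1 x\<bar> \<le> \<bar>expF \<mu> \<sigma> (max \<mu> 0) - expF 0 1 (max \<mu> 0)\<bar>"
    by (rule abs_expF_diff_le_at_max[OF assms])
  also have "\<dots> = U \<mu> \<sigma>"
    using expF_diff_eq_tail_diff[of \<mu> "max \<mu> 0" \<sigma>] abs_tail_diff_at_max_eq_U[OF assms] by simp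
  finally show ?thesis by simp
next
  case False
  then have "max \<mu> 0 \<le> x" by linarith
  then show ?thesis
    using expF_diff_eq_tail_diff abs_tail_diff_le_max_U_V[OF assms] by metis
qed

lemma abs_expF_diff_attains_max_U_V:
  assumes "\<sigma> > 0"
  shows "\<exists>x. \<bar>expF \<mu> \<sigma> x - expF 0 1 x\<bar> = max (U \<mu> \<sigma>) (V \<mu> \<sigma>)"
proof (cases "V \<mu> \<sigma> \<le> U \<mu> \<sigma>")
  case True
  moreover have "\<bar>expF \<mu> \<sigma> (max \<mu> 0) - expF 0 1 (max \<mu> 0)\<bar> = U \<mu> \<sigma>"
    using expF_diff_eq_tail_diff[of \<mu> "max \<mu> 0" \<sigma>] abs_tail_diff_at_max_eq_U[OF assms] by simp
  ultimately show ?thesis by (intro exI[of _ "max \<mu> 0"]) simp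
next
  case False
  have "U \<mu> \<sigma> \<ge> 0" using abs_tail_diff_at_max_eq_U[OF assms, of \<mu>] by simp
  with False have "V \<mu> \<sigma> \<noteq> 0" by linarith
  then have "\<sigma> \<noteq> 1" by (auto simp: V_def)
  with \<open>V \<mu> \<sigma> \<noteq> 0\<close> have "max \<mu> 0 < crit_point \<mu> \<sigma>"
    and "V \<mu> \<sigma> = \<bar>tail_diff \<mu> \<sigma> (crit_point \<mu> \<sigma>)\<bar>"
    using V_eq_abs_tail_diff_at_crit_point[OF assms] by (auto split: if_splits)
  then show ?thesis
    using False expF_diff_eq_tail_diff[of \<mu> "crit_point \<mu> \<sigma>" \<sigma>]
    by (intro exI[of _ "crit_point \<mu> \<sigma>"]) simp
qed

theorem mainTheorem5:
  fixes \<mu> \<sigma> :: real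
  assumes "\<sigma> > 0"
  shows "(SUP x::real. \<bar>expF \<mu> \<sigma> x - expF 0 1 x\<bar>) = max (U \<mu> \<sigma>) (V \<mu> \<sigma>)"
proof (rule cSup_eq_maximum)
  obtain x where "\<bar>expF \<mu> \<sigma> x - expF 0 1 x\<bar> = max (U \<mu> \<sigma>) (V \<mu> \<sigma>)"
    using abs_expF_diff_attains_max_U_V[OF assms] by blast
  then show "max (U \<mu> \<sigma>) (V \<mu> \<sigma>) \<in> range (\<lambda>x. \<bar>expF \<mu> \<sigma> x - expF 0 1 x\<bar>)"
    by (rule range_eqI[OF sym])
  show "y \<le> max (U \<mu> \<sigma>) (V \<mu> \<sigma>)" if "y \<in> range (\<lambda>x. \<bar>expF \<mu> \<sigma> x - expF 0 1 x\<bar>)" for y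
    using that abs_expF_diff_le_max_U_V[OF assms] by blast
qed

end
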